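(* Let $\varphi\colon\mathbb{C}^*\times\mathbb{C}^n\to\mathbb{C}^n$ be a holomorphic action with a fixed point at $p$, let $\psi_p^z(x)=D\varphi^z(p)\cdot x$ be the action by linear transformations defined by the derivative of $\varphi$ at $p$, and let $F_p\colon\mathbb{C}^n\to\mathbb{C}^n$ be the holomorphic map $$F_p(x)=\int_0^1 D\phi^{-s}(p)\cdot\big[\phi^s(x)-p\big]\,ds,\qquad \phi^s:=\varphi\big(\exp(2\pi\sqrt{-1}s),\cdot\big).$$ (This map satisfies $\psi_p^z\circ F_p\equiv F_p\circ\varphi^z$ for all $z\in\mathbb{C}^*$, $F_p(p)=0$, $DF_p(p)=\mathrm{Id}$.) If $U\ni p$ and $V=F_p(U)$ are open sets in $\mathbb{C}^n$ such that (1) $F_p$ is injective on $U$, and (2) $\psi_p^z(V)\cap V$ is connected for each $z\in\mathbb{C}^*$, then $F_p$ is injective on the saturation $\mathrm{Sat}(U,\varphi)$ of $U$ by $\varphi$.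
   Context: A holomorphic action of $\mathbb{C}^*$ on $\mathbb{C}^n$ is a holomorphic map $\varphi\colon\mathbb{C}^*\times\mathbb{C}^n\to\mathbb{C}^n$ with $\varphi(1,x)=x$, $\varphi(zw,x)=\varphi(z,\varphi(w,x))$; $\varphi^z=\varphi(z,\cdot)$. The saturation $\mathrm{Sat}(U,\varphi)$ is the union of all $\varphi$-orbits meeting $U$. *)

theory Defs
  imports "HOL-Analysis.Analysis"
begin

text \<open>C^n is modelled as complex ^ 'n. A map on an open subset of C x C^n is holomorphic
  iff it is real-Frechet differentiable at each point with a complex-linear derivative.\<close>

definition holomorphic_action :: "(complex \<Rightarrow> complex ^ 'n \<Rightarrow> complex ^ 'n) \<Rightarrow> bool" where
  "holomorphic_action \<phi> \<longleftrightarrow>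
     (\<forall>z x. z \<noteq> 0 \<longrightarrow>
        (\<exists>L. ((\<lambda>(w, y). \<phi> w y) has_derivative L) (at (z, x)) \<and>
             (\<forall>c a v. L (c * a, c *s v) = c *s L (a, v)))) \<and>
     (\<forall>x. \<phi> 1 x = x) \<and>
     (\<forall>z w x. z \<noteq> 0 \<longrightarrow> w \<noteq> 0 \<longrightarrow> \<phi> (z * w) x = \<phi> z (\<phi> w x))"

definition orbit :: "(complex \<Rightarrow> 'a \<Rightarrow> 'a) \<Rightarrow> 'a \<Rightarrow> 'a set" where
  "orbit \<phi> x = {\<phi> z x | z. z \<noteq> 0}"

definition Sat :: "'a set \<Rightarrow> (complex \<Rightarrow> 'a \<Rightarrow> 'a) \<Rightarrow> 'a set" where
  "Sat U \<phi> = \<Union> {orbit \<phi> x | x. orbit \<phi> x \<inter> U \<noteq> {}}"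

definition lin_action :: "(complex \<Rightarrow> complex ^ 'n \<Rightarrow> complex ^ 'n) \<Rightarrow> complex ^ 'n
    \<Rightarrow> complex \<Rightarrow> complex ^ 'n \<Rightarrow> complex ^ 'n" where
  "lin_action \<phi> p z x = frechet_derivative (\<phi> z) (at p) x"

definition Fmap :: "(complex \<Rightarrow> complex ^ 'n \<Rightarrow> complex ^ 'n) \<Rightarrow> complex ^ 'n
    \<Rightarrow> complex ^ 'n \<Rightarrow> complex ^ 'n" where
  "Fmap \<phi> p x = integral {0..1::real}
     (\<lambda>s. lin_action \<phi> p (exp (- 2 * pi * \<i> * complex_of_real s))
            (\<phi> (exp (2 * pi * \<i> * complex_of_real s)) x - p))"

end

theory Submission
  imports Defs "HOL-Complex_Analysis.Complex_Analysis"
begin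

(* Since phi fixes p, the chain rule makes z |-> psi z = D phi^z(p) a linear representation of
   C*, and the Cauchy formula psi z v = (2 pi i)^-1 * contour integral of phi^z(p + u v) / u^2
   over |u| = 1 shows, via Morera, that it depends holomorphically on z. Hence the integrand
   w |-> psi (1/w) (phi^w x - p) of F is holomorphic on C*, so its averages over the circles
   |w| = |z| and |w| = 1 coincide; this is the equivariance F o phi^z = psi z o F.

   If F (phi^z1 u1) = F (phi^z2 u2) with u1, u2 in U, then F u1 = psi w (F u2) for w = z2/z1.
   Let G : V -> U be the continuous inverse of F (invariance of domain). On the connected
   intersection W of psi w (V) and V, the locus where G agrees with the map
   v |-> phi^w (G (psi (1/w) v)) is closed and, by injectivity of F on U, equal to the
   preimage of U under that map, hence open. It contains F p, so it is all of W; evaluating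
   at F u1 gives u1 = phi^w u2. *)

no_notation fps_nth (infixl \<open>$\<close> 75)

lemma bounded_linear_vector_smult_left:
  "bounded_linear (\<lambda>c::complex. c *s (v::complex ^ 'n))"
proof -
  have "linear (\<lambda>c::complex. c *s v)"
    by (rule linearI) (auto simp: vec_eq_iff vector_sadd_rdistrib)
  then show ?thesis by (simp add: linear_conv_bounded_linear)
qed

lemma continuous_on_vector_smult:
  fixes f :: "'a::topological_space \<Rightarrow> 'b::real_normed_field" and g :: "'a \<Rightarrow> 'b ^ 'n"
  assumes "continuous_on T f" "continuous_on T g"
  shows "continuous_on T (\<lambda>t. f t *s g t)"
proof -
  have "continuous_on T (\<lambda>t. \<chi> k. f t * g t $ k)"
    by (intro continuous_intros assms)
  then show ?thesis by (simp add: vec_eq_iff[symmetric] vector_scalar_mult_def)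
qed

lemma integral_vec_nth:
  fixes f :: "real \<Rightarrow> complex ^ 'n"
  assumes "f integrable_on S"
  shows "integral S f $ i = integral S (\<lambda>t. f t $ i)"
  using integral_linear[OF assms bounded_linear_vec_nth, of i] by (simp add: o_def)

lemma continuous_on_contour_integral_param:
  fixes K :: "'a::topological_space \<Rightarrow> complex \<Rightarrow> complex"
  assumes "path \<gamma>"
    and "continuous_on {0..1} (\<lambda>t. vector_derivative \<gamma> (at t))"
    and "continuous_on (S \<times> path_image \<gamma>) (\<lambda>(w, u). K w u)"
  shows "continuous_on S (\<lambda>w. contour_integral \<gamma> (K w))"
proof -
  have "continuous_on (S \<times> {0..1}) (\<lambda>x. (fst x, \<gamma> (snd x)))"
    using assms(1) unfolding path_def
    by (intro continuous_intros continuous_on_compose2[OF _ continuous_on_snd]) auto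
  then have "continuous_on (S \<times> {0..1}) (\<lambda>x. (\<lambda>(w, u). K w u) (fst x, \<gamma> (snd x)))"
    by (rule continuous_on_compose2[OF assms(3)]) (auto simp: path_image_def)
  moreover have "continuous_on (S \<times> {0..1}) (\<lambda>x. vector_derivative \<gamma> (at (snd x)))"
    by (rule continuous_on_compose2[OF assms(2) continuous_on_snd]) auto
  ultimately have "continuous_on (S \<times> cbox 0 1) (\<lambda>(w, t). K w (\<gamma> t) * vector_derivative \<gamma> (at t))"
    using continuous_on_mult by (fastforce simp: case_prod_beta cbox_interval)
  from integral_continuous_on_param[OF this]
  show ?thesis by (simp add: contour_integral_integral cbox_interval)
qed

lemma contour_integrable_continuous_derivative:
  assumes "path \<gamma>"
    and "continuous_on {0..1} (\<lambda>t. vector_derivative \<gamma> (at t))"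
    and "continuous_on (path_image \<gamma>) f"
  shows "f contour_integrable_on \<gamma>"
  unfolding contour_integrable_on
proof (rule integrable_continuous_interval, rule continuous_on_mult[OF _ assms(2)])
  show "continuous_on {0..1} (\<lambda>t. f (\<gamma> t))"
    using continuous_on_compose2[OF assms(3) assms(1)[unfolded path_def]]
    by (simp add: path_image_def)
qed

lemma holomorphic_on_contour_integral_param:
  fixes K :: "complex \<Rightarrow> complex \<Rightarrow> complex"
  assumes "open S" "valid_path \<gamma>"
    and vd: "continuous_on {0..1} (\<lambda>t. vector_derivative \<gamma> (at t))"
    and K: "continuous_on (S \<times> path_image \<gamma>) (\<lambda>(w, u). K w u)"
    and hol: "\<And>u. u \<in> path_image \<gamma> \<Longrightarrow> (\<lambda>w. K w u) holomorphic_on S"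
  shows "(\<lambda>w. contour_integral \<gamma> (K w)) holomorphic_on S"
proof -
  define Q where "Q = (\<lambda>w. contour_integral \<gamma> (K w))"
  define I where "I = (\<lambda>a b u. contour_integral (linepath a b) (\<lambda>w. K w u))"
  have \<gamma>: "path \<gamma>" using \<open>valid_path \<gamma>\<close> by (rule valid_path_imp_path)
  have edge: "contour_integral (linepath a b) Q = contour_integral \<gamma> (I a b)"
    "I a b contour_integrable_on \<gamma>"
    if ab: "closed_segment a b \<subseteq> S" for a b
  proof -
    have Kab: "continuous_on (closed_segment a b \<times> path_image \<gamma>) (\<lambda>(w, u). K w u)"
      using K by (rule continuous_on_subset) (use ab in auto)
    show "contour_integral (linepath a b) Q = contour_integral \<gamma> (I a b)"
      unfolding Q_def I_def
      by (rule contour_integral_swap) (use Kab vd \<open>valid_path \<gamma>\<close> in auto)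
    have "continuous_on (path_image \<gamma> \<times> closed_segment a b) (\<lambda>(u, w). K w u)"
      using continuous_on_swap_args[OF Kab] by simp
    then have "continuous_on (path_image \<gamma>) (I a b)"
      unfolding I_def by (intro continuous_on_contour_integral_param) auto
    then show "I a b contour_integrable_on \<gamma>"
      by (rule contour_integrable_continuous_derivative[OF \<gamma> vd])
  qed
  have triangle: "contour_integral (linepath a b) Q + contour_integral (linepath b c) Q +
      contour_integral (linepath c a) Q = 0"
    if abc: "convex hull {a, b, c} \<subseteq> S" for a b c
  proof -
    have segs: "closed_segment x y \<subseteq> S" if "x \<in> {a, b, c}" "y \<in> {a, b, c}" for x y
      using closed_segment_subset_convex_hull[of x "{a, b, c}" y] abc that
      by (meson hull_inc order_trans)
    have "I a b u + I b c u + I c a u = 0" if "u \<in> path_image \<gamma>" for u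
      unfolding I_def
      by (rule has_chain_integral_chain_integral3[OF Cauchy_theorem_triangle])
         (use holomorphic_on_subset[OF hol[OF that] abc] in auto)
    then have "contour_integral \<gamma> (\<lambda>u. I a b u + I b c u + I c a u) = 0"
      using contour_integral_eq[of \<gamma> _ "\<lambda>_. 0"] by simp
    then show ?thesis
      using edge[OF segs] by (simp add: contour_integral_add contour_integrable_add)
  qed
  have "continuous_on S Q"
    unfolding Q_def by (rule continuous_on_contour_integral_param[OF \<gamma> vd K])
  then have "Q analytic_on S"
    using Morera_triangle[OF _ \<open>open S\<close>] triangle by blast
  then show ?thesis
    unfolding Q_def by (rule analytic_imp_holomorphic)
qed

lemma integral_circle_scale:
  assumes f: "f holomorphic_on - {0}" and "z \<noteq> 0"
  shows "integral {0..1} (\<lambda>t. f (z * exp (2 * pi * \<i> * complex_of_real t)))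
       = integral {0..1} (\<lambda>t. f (exp (2 * pi * \<i> * complex_of_real t)))"
proof -
  define g where "g = (\<lambda>w. f w / w)"
  have g: "g holomorphic_on - {0}"
    unfolding g_def by (intro holomorphic_intros f) auto
  define \<gamma> where "\<gamma> = (*) z \<circ> circlepath 0 1"
  have \<gamma>: "\<gamma> t = z * exp (2 * pi * \<i> * complex_of_real t)" for t
    by (simp add: \<gamma>_def circlepath)
  have "valid_path \<gamma>"
    unfolding \<gamma>_def by (rule valid_path_compose_holomorphic[where S=UNIV]) auto
  have vd: "vector_derivative \<gamma> (at t) = z * (2 * pi * \<i> * exp (2 * pi * \<i> * complex_of_real t))" for t
  proof -
    have "(\<gamma> has_vector_derivative z * (2 * pi * \<i> * exp (2 * pi * \<i> * complex_of_real t))) (at t)"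
      using has_vector_derivative_mult_right[OF has_vector_derivative_circlepath[of 0 1 t UNIV], of z]
      by (simp add: \<gamma>_def o_def)
    then show ?thesis by (rule vector_derivative_at)
  qed
  \<comment> \<open>Deform \<open>z\<close> to \<open>1\<close> along \<open>z powr (1 - s)\<close>.\<close>
  have "homotopic_loops (- {0}) \<gamma> (circlepath 0 1)"
    unfolding homotopic_loops
  proof (intro exI conjI)
    let ?h = "\<lambda>(s, t). exp ((1 - of_real s) * Ln z) * exp (2 * of_real pi * \<i> * of_real t)"
    show "continuous_on ({0..1} \<times> {0..1}) ?h"
      by (simp add: case_prod_beta) (intro continuous_intros)
    show "?h \<in> {0..1} \<times> {0..1} \<rightarrow> - {0}" by auto
    show "\<forall>t\<in>{0..1}. ?h (0, t) = \<gamma> t" using \<open>z \<noteq> 0\<close> by (simp add: \<gamma>)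
    show "\<forall>t\<in>{0..1}. ?h (1, t) = circlepath 0 1 t" by (simp add: circlepath)
    show "\<forall>s\<in>{0..1}. pathfinish (?h \<circ> Pair s) = pathstart (?h \<circ> Pair s)"
      by (simp add: pathfinish_def pathstart_def)
  qed
  then have "contour_integral \<gamma> g = contour_integral (circlepath 0 1) g"
    using Cauchy_theorem_homotopic_loops[OF _ _ g \<open>valid_path \<gamma>\<close> valid_path_circlepath]
    by (simp add: open_Compl)
  moreover have "contour_integral \<gamma> g =
      integral {0..1} (\<lambda>t. 2 * pi * \<i> * f (z * exp (2 * pi * \<i> * complex_of_real t)))"
    unfolding contour_integral_integral using \<open>z \<noteq> 0\<close>
    by (intro integral_cong) (simp add: \<gamma> vd g_def field_simps)
  moreover have "contour_integral (circlepath 0 1) g =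
      integral {0..1} (\<lambda>t. 2 * pi * \<i> * f (exp (2 * pi * \<i> * complex_of_real t)))"
    unfolding contour_integral_integral vector_derivative_circlepath
    by (intro integral_cong) (simp add: circlepath g_def field_simps)
  ultimately show ?thesis by simp
qed

lemma connected_eq_if_eq_on_preimage:
  fixes G H :: "'a::topological_space \<Rightarrow> 'b::real_normed_vector"
  assumes "connected W" "continuous_on W G" "continuous_on W H" "open U" "G ` W \<subseteq> U"
    and eq: "\<And>v. v \<in> W \<Longrightarrow> H v \<in> U \<Longrightarrow> G v = H v"
    and "v0 \<in> W" "G v0 = H v0" "v \<in> W"
  shows "G v = H v"
proof -
  have "closedin (top_of_set W) {v \<in> W. G v - H v = 0}"
    using assms(2,3) by (intro continuous_closedin_preimage_constant continuous_intros)
  moreover have "{v \<in> W. G v - H v = 0} = W \<inter> H -` U"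
    using eq assms(5) by auto
  then have "openin (top_of_set W) {v \<in> W. G v - H v = 0}"
    using continuous_openin_preimage_gen[OF assms(3,4)] by simp
  ultimately have "{v \<in> W. G v - H v = 0} = W"
    using assms(1,7,8) unfolding connected_clopen by force
  then show ?thesis using \<open>v \<in> W\<close> by auto
qed

lemma intertwined_values_eq:
  fixes F \<Phi> L L' :: "'a::euclidean_space \<Rightarrow> 'a"
  assumes "open U" "p \<in> U" "continuous_on U F" "inj_on F U"
    and "continuous_on UNIV \<Phi>" "continuous_on UNIV L'"
    and F\<Phi>: "\<And>x. x \<in> U \<Longrightarrow> F (\<Phi> x) = L (F x)" and "\<Phi> p = p"
    and LL': "\<And>v. L (L' v) = v" and L'L: "\<And>v. L' (L v) = v"
    and conn: "connected (L ` F ` U \<inter> F ` U)"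
    and u: "u1 \<in> U" "u2 \<in> U" "F u1 = L (F u2)"
  shows "u1 = \<Phi> u2"
proof -
  define V where "V = F ` U"
  obtain G where "homeomorphism U V F G"
    using invariance_of_domain_homeomorphism[OF assms(1,3) _ assms(4)] unfolding V_def by auto
  then have GF: "\<And>x. x \<in> U \<Longrightarrow> G (F x) = x" and FG: "\<And>v. v \<in> V \<Longrightarrow> F (G v) = v"
    and GV: "\<And>v. v \<in> V \<Longrightarrow> G v \<in> U" and G: "continuous_on V G"
    unfolding homeomorphism_def by auto
  have FV: "x \<in> U \<Longrightarrow> F x \<in> V" for x by (simp add: V_def)
  define W where "W = L ` V \<inter> V"
  define H where "H = (\<lambda>v. \<Phi> (G (L' v)))"
  have L'W: "L' v \<in> V" if "v \<in> W" for v
    using that L'L unfolding W_def by auto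
  have "connected W" using conn by (simp add: W_def V_def)
  moreover have "continuous_on W G"
    using G by (rule continuous_on_subset) (simp add: W_def)
  moreover have "continuous_on W H"
    unfolding H_def using L'W
    by (intro continuous_on_compose2[OF assms(5) continuous_on_compose2[OF G]]
          continuous_on_subset[OF assms(6)]) auto
  moreover note \<open>open U\<close>
  moreover have "G ` W \<subseteq> U" unfolding W_def using GV by blast
  moreover have "G v = H v" if "v \<in> W" "H v \<in> U" for v
  proof -
    have "v \<in> V" using that(1) by (simp add: W_def)
    have "F (H v) = L (F (G (L' v)))"
      unfolding H_def using F\<Phi> GV L'W that by blast
    also have "\<dots> = F (G v)"
      using FG L'W LL' that unfolding W_def by auto
    finally show "G v = H v"
      using inj_onD[OF \<open>inj_on F U\<close> _ GV[OF \<open>v \<in> V\<close>] that(2)] by simp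
  qed
  moreover have "F p \<in> W" "G (F p) = H (F p)"
  proof -
    have "L (F p) = F p" using F\<Phi>[OF \<open>p \<in> U\<close>] \<open>\<Phi> p = p\<close> by simp
    then have "F p \<in> L ` V" using FV[OF \<open>p \<in> U\<close>] by (metis image_eqI)
    then show "F p \<in> W" using FV[OF \<open>p \<in> U\<close>] by (simp add: W_def)
    show "G (F p) = H (F p)"
      using \<open>L (F p) = F p\<close> L'L[of "F p"] GF \<open>p \<in> U\<close> \<open>\<Phi> p = p\<close> by (simp add: H_def)
  qed
  moreover have "F u1 \<in> W"
    using FV[OF u(1)] FV[OF u(2)] u(3) by (simp add: W_def)
  ultimately have "G (F u1) = H (F u1)"
    by (rule connected_eq_if_eq_on_preimage)
  then have "u1 = H (F u1)" using GF[OF u(1)] by simp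
  also have "\<dots> = \<Phi> u2" unfolding H_def using u L'L GF by simp
  finally show ?thesis .
qed

locale fixed_point_action =
  fixes \<phi> :: "complex \<Rightarrow> complex ^ 'n \<Rightarrow> complex ^ 'n" and p :: "complex ^ 'n"
  assumes holomorphic: "holomorphic_action \<phi>"
    and fixed: "\<And>z. z \<noteq> 0 \<Longrightarrow> \<phi> z p = p"
begin

lemma action_one: "\<phi> 1 x = x"
  using holomorphic unfolding holomorphic_action_def by blast

lemma action_mult: "z \<noteq> 0 \<Longrightarrow> w \<noteq> 0 \<Longrightarrow> \<phi> (z * w) x = \<phi> z (\<phi> w x)"
  using holomorphic unfolding holomorphic_action_def by blast

lemma action_has_derivative:
  assumes "z \<noteq> 0"
  obtains L where "((\<lambda>(w, y). \<phi> w y) has_derivative L) (at (z, x))"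
    and "\<And>c a v. L (c * a, c *s v) = c *s L (a, v)"
  using holomorphic assms unfolding holomorphic_action_def by blast

lemma continuous_on_action_comp:
  assumes "continuous_on T b" "continuous_on T a" "\<And>t. t \<in> T \<Longrightarrow> b t \<noteq> 0"
  shows "continuous_on T (\<lambda>t. \<phi> (b t) (a t))"
proof -
  have "continuous (at (z, x)) (\<lambda>(w, y). \<phi> w y)" if "z \<noteq> 0" for z x
    using action_has_derivative[OF that] has_derivative_continuous by metis
  then have "continuous_on ((- {0}) \<times> UNIV) (\<lambda>(w, y). \<phi> w y)"
    by (auto intro!: continuous_at_imp_continuous_on)
  then have "continuous_on T ((\<lambda>(w, y). \<phi> w y) \<circ> (\<lambda>t. (b t, a t)))"
    by (rule continuous_on_compose[OF continuous_on_Pair[OF assms(1,2)] continuous_on_subset])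
       (use assms(3) in auto)
  then show ?thesis by (simp add: o_def)
qed

lemma action_space_derivative:
  assumes "z \<noteq> 0"
  shows "(\<phi> z has_derivative frechet_derivative (\<phi> z) (at x)) (at x)"
    and "frechet_derivative (\<phi> z) (at x) (c *s v) = c *s frechet_derivative (\<phi> z) (at x) v"
proof -
  obtain L where L: "((\<lambda>(w, y). \<phi> w y) has_derivative L) (at (z, x))"
    and hom: "\<And>c a v. L (c * a, c *s v) = c *s L (a, v)"
    using action_has_derivative[OF assms] by blast
  have "((\<lambda>y. (z, y)) has_derivative (\<lambda>v. (0, v))) (at x)"
    by (auto intro!: derivative_eq_intros)
  from diff_chain_at[OF this L]
  have d: "(\<phi> z has_derivative (\<lambda>v. L (0, v))) (at x)" by (simp add: o_def)
  then have "frechet_derivative (\<phi> z) (at x) = (\<lambda>v. L (0, v))"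
    by (metis frechet_derivative_at)
  then show "(\<phi> z has_derivative frechet_derivative (\<phi> z) (at x)) (at x)"
    and "frechet_derivative (\<phi> z) (at x) (c *s v) = c *s frechet_derivative (\<phi> z) (at x) v"
    using d hom[of c 0 v] by simp_all
qed

lemma holomorphic_on_action_component: "(\<lambda>w. \<phi> w x $ i) holomorphic_on - {0}"
proof -
  have "\<exists>c. ((\<lambda>w. \<phi> w x $ i) has_field_derivative c) (at z)" if z: "z \<noteq> 0" for z
  proof -
    obtain L where L: "((\<lambda>(w, y). \<phi> w y) has_derivative L) (at (z, x))"
      and hom: "\<And>c a v. L (c * a, c *s v) = c *s L (a, v)"
      using action_has_derivative[OF z] by blast
    have "((\<lambda>w. (w, x)) has_derivative (\<lambda>a. (a, 0))) (at z)"
      by (auto intro!: derivative_eq_intros)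
    from diff_chain_at[OF this L]
    have "((\<lambda>w. \<phi> w x) has_derivative (\<lambda>a. L (a, 0))) (at z)" by (simp add: o_def)
    from bounded_linear.has_derivative[OF bounded_linear_vec_nth this, of i]
    have "((\<lambda>w. \<phi> w x $ i) has_derivative (\<lambda>a. L (a, 0) $ i)) (at z)" .
    moreover have "(\<lambda>a. L (a, 0) $ i) = (*) (L (1, 0) $ i)"
    proof
      fix a
      have "L (a, 0) = a *s L (1, 0)" using hom[of a 1 0] by simp
      then show "L (a, 0) $ i = L (1, 0) $ i * a" by (simp add: mult.commute)
    qed
    ultimately have "((\<lambda>w. \<phi> w x $ i) has_field_derivative L (1, 0) $ i) (at z)"
      unfolding has_field_derivative_def by simp
    then show ?thesis by blast
  qed
  then show ?thesis
    unfolding holomorphic_on_open[OF open_Compl[OF closed_singleton]] by auto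
qed

abbreviation \<psi> where "\<psi> \<equiv> lin_action \<phi> p"

lemma psi_has_derivative: "z \<noteq> 0 \<Longrightarrow> (\<phi> z has_derivative \<psi> z) (at p)"
  unfolding lin_action_def[abs_def] by (rule action_space_derivative(1))

lemma bounded_linear_psi: "z \<noteq> 0 \<Longrightarrow> bounded_linear (\<psi> z)"
  using psi_has_derivative has_derivative_bounded_linear by blast

lemma psi_smult: "z \<noteq> 0 \<Longrightarrow> \<psi> z (c *s v) = c *s \<psi> z v"
  unfolding lin_action_def by (rule action_space_derivative(2))

lemma psi_mult:
  assumes "z \<noteq> 0" "w \<noteq> 0"
  shows "\<psi> (z * w) v = \<psi> z (\<psi> w v)"
proof -
  have "(\<phi> z has_derivative \<psi> z) (at (\<phi> w p))"
    using psi_has_derivative[OF assms(1)] fixed[OF assms(2)] by simp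
  from diff_chain_at[OF psi_has_derivative[OF assms(2)] this]
  have "(\<phi> z \<circ> \<phi> w has_derivative \<psi> z \<circ> \<psi> w) (at p)" .
  moreover have "\<phi> z \<circ> \<phi> w = \<phi> (z * w)"
    using action_mult assms by (auto simp: fun_eq_iff)
  ultimately have "(\<phi> (z * w) has_derivative \<psi> z \<circ> \<psi> w) (at p)" by simp
  with psi_has_derivative have "\<psi> (z * w) = \<psi> z \<circ> \<psi> w"
    using assms by (metis has_derivative_unique mult_eq_0_iff)
  then show ?thesis by simp
qed

lemma psi_one: "\<psi> 1 v = v"
proof -
  have "\<phi> 1 = id" using action_one by (auto simp: fun_eq_iff)
  then have "(\<phi> 1 has_derivative id) (at p)" by (simp add: has_derivative_id)
  from has_derivative_unique[OF psi_has_derivative[of 1] this] show ?thesis by simp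
qed

lemma psi_inverse_left: "z \<noteq> 0 \<Longrightarrow> \<psi> (inverse z) (\<psi> z v) = v"
  using psi_mult[of "inverse z" z v] psi_one by simp

lemma psi_inverse_right: "z \<noteq> 0 \<Longrightarrow> \<psi> z (\<psi> (inverse z) v) = v"
  using psi_mult[of z "inverse z" v] psi_one by simp

lemma psi_component_contour_integral:
  assumes "w \<noteq> 0"
  shows "((\<lambda>u. \<phi> w (p + u *s v) $ i / u\<^sup>2) has_contour_integral 2 * pi * \<i> * \<psi> w v $ i)
           (circlepath 0 1)"
proof -
  define g where "g = (\<lambda>u. \<phi> w (p + u *s v) $ i)"
  have g: "(g has_field_derivative frechet_derivative (\<phi> w) (at (p + u *s v)) v $ i) (at u)" for u
  proof -
    have "((\<lambda>u. p + u *s v) has_derivative (\<lambda>c. c *s v)) (at u)"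
      using has_derivative_add[OF has_derivative_const
          bounded_linear_imp_has_derivative[OF bounded_linear_vector_smult_left]]
      by simp
    from diff_chain_at[OF this action_space_derivative(1)[OF assms]]
    have "((\<lambda>u. \<phi> w (p + u *s v)) has_derivative
        (\<lambda>c. frechet_derivative (\<phi> w) (at (p + u *s v)) (c *s v))) (at u)"
      by (simp add: o_def)
    from bounded_linear.has_derivative[OF bounded_linear_vec_nth this, of i]
    show ?thesis
      unfolding g_def has_field_derivative_def
      by (simp add: action_space_derivative(2)[OF assms] mult_commute_abs)
  qed
  then have "g holomorphic_on UNIV"
    by (auto simp: holomorphic_on_open field_differentiable_def)
  then have "((\<lambda>u. g u / (u - 0) ^ Suc 1) has_contour_integral
      2 * pi * \<i> / fact 1 * (deriv ^^ 1) g 0) (circlepath 0 1)"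
    by (intro Cauchy_has_contour_integral_higher_derivative_circlepath)
       (auto intro: holomorphic_on_imp_continuous_on holomorphic_on_subset)
  moreover have "deriv g 0 = \<psi> w v $ i"
    using DERIV_imp_deriv[OF g[of 0]] by (simp add: lin_action_def)
  ultimately show ?thesis by (simp add: g_def power2_eq_square)
qed

lemma holomorphic_on_psi_component: "(\<lambda>w. \<psi> w v $ i) holomorphic_on - {0}"
proof -
  define K where "K = (\<lambda>w u. \<phi> w (p + u *s v) $ i / u\<^sup>2)"
  have "continuous_on ((- {0}) \<times> (- {0})) (\<lambda>x. \<phi> (fst x) (p + snd x *s v))"
    by (intro continuous_on_action_comp continuous_intros continuous_on_vector_smult) auto
  then have "continuous_on ((- {0}) \<times> (- {0})) (\<lambda>(w, u). K w u)"
    unfolding K_def case_prod_beta by (intro continuous_intros) auto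
  then have K: "continuous_on ((- {0}) \<times> path_image (circlepath 0 1)) (\<lambda>(w, u). K w u)"
    by (rule continuous_on_subset) (auto simp: path_image_circlepath_nonneg)
  have "(\<lambda>w. \<phi> w (p + u *s v) $ i * inverse (u\<^sup>2)) holomorphic_on - {0}" for u
    by (intro holomorphic_intros holomorphic_on_action_component)
  then have "(\<lambda>w. K w u) holomorphic_on - {0}" for u
    by (simp add: K_def divide_inverse)
  with K have "(\<lambda>w. contour_integral (circlepath 0 1) (K w) / (2 * pi * \<i>)) holomorphic_on - {0}"
    by (intro holomorphic_intros holomorphic_on_contour_integral_param)
       (auto simp: open_Compl vector_derivative_circlepath intro!: continuous_intros)
  moreover have "contour_integral (circlepath 0 1) (K w) / (2 * pi * \<i>) = \<psi> w v $ i"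
    if "w \<in> - {0}" for w
    using contour_integral_unique[OF psi_component_contour_integral] that by (simp add: K_def)
  ultimately show ?thesis by (rule holomorphic_transform)
qed

lemma psi_basis_expansion:
  assumes "w \<noteq> 0"
  shows "\<psi> w u = (\<Sum>j\<in>UNIV. u $ j *s \<psi> w (axis j 1))"
proof -
  have "\<psi> w u = \<psi> w (\<Sum>j\<in>UNIV. u $ j *s axis j 1)" by (simp add: basis_expansion)
  also have "\<dots> = (\<Sum>j\<in>UNIV. \<psi> w (u $ j *s axis j 1))"
    by (rule linear_sum[OF bounded_linear.linear[OF bounded_linear_psi[OF assms]]])
  finally show ?thesis by (simp add: psi_smult[OF assms])
qed

lemma continuous_on_psi_comp:
  assumes "continuous_on T b" "continuous_on T a" "\<And>t. t \<in> T \<Longrightarrow> b t \<noteq> 0"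
  shows "continuous_on T (\<lambda>t. \<psi> (b t) (a t))"
proof -
  have "continuous_on (- {0}) (\<lambda>w. \<chi> k. \<psi> w v $ k)" for v
    by (intro continuous_on_vec_lambda holomorphic_on_imp_continuous_on holomorphic_on_psi_component)
  then have "continuous_on (- {0}) (\<lambda>w. \<psi> w v)" for v
    by simp
  then have "continuous_on T (\<lambda>t. \<psi> (b t) v)" for v
    using assms(3) by (intro continuous_on_compose2[OF _ assms(1)]) auto
  then have "continuous_on T (\<lambda>t. \<Sum>j\<in>UNIV. a t $ j *s \<psi> (b t) (axis j 1))"
    using assms(2) by (intro continuous_on_sum continuous_on_vector_smult continuous_intros)
  then show ?thesis
    by (rule continuous_on_cong[THEN iffD1, OF refl, rotated]) (simp add: psi_basis_expansion assms(3))
qed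

lemma holomorphic_on_psi_comp:
  assumes "b holomorphic_on S" "\<And>j. (\<lambda>w. a w $ j) holomorphic_on S" "\<And>w. w \<in> S \<Longrightarrow> b w \<noteq> 0"
  shows "(\<lambda>w. \<psi> (b w) (a w) $ i) holomorphic_on S"
proof -
  have "((\<lambda>w. \<psi> w (axis j 1) $ i) \<circ> b) holomorphic_on S" for j
    by (rule holomorphic_on_compose_gen[OF assms(1) holomorphic_on_psi_component]) (use assms(3) in auto)
  then have "(\<lambda>w. \<psi> (b w) (axis j 1) $ i) holomorphic_on S" for j
    by (simp add: o_def)
  then have "(\<lambda>w. \<Sum>j\<in>UNIV. a w $ j * \<psi> (b w) (axis j 1) $ i) holomorphic_on S"
    by (intro holomorphic_intros assms(2))
  then show ?thesis
    by (rule holomorphic_transform) (simp add: psi_basis_expansion assms(3) sum_component)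
qed

abbreviation F where "F \<equiv> Fmap \<phi> p"

definition twisted_orbit :: "complex ^ 'n \<Rightarrow> complex \<Rightarrow> complex ^ 'n" where
  "twisted_orbit x w = \<psi> (inverse w) (\<phi> w x - p)"

lemma Fmap_eq_integral_twisted_orbit:
  "F x = integral {0..1} (\<lambda>t. twisted_orbit x (exp (2 * pi * \<i> * complex_of_real t)))"
  unfolding Fmap_def twisted_orbit_def by (simp add: exp_minus[symmetric])

lemma continuous_on_twisted_orbit_comp:
  assumes "continuous_on T a" "continuous_on T b" "\<And>t. t \<in> T \<Longrightarrow> b t \<noteq> 0"
  shows "continuous_on T (\<lambda>t. twisted_orbit (a t) (b t))"
  unfolding twisted_orbit_def
  using assms by (intro continuous_on_psi_comp continuous_on_action_comp continuous_intros) auto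

lemma holomorphic_on_twisted_orbit_component: "(\<lambda>w. twisted_orbit x w $ i) holomorphic_on - {0}"
  unfolding twisted_orbit_def
  by (rule holomorphic_on_psi_comp) (auto intro!: holomorphic_intros holomorphic_on_action_component)

lemma twisted_orbit_action:
  assumes "z \<noteq> 0" "w \<noteq> 0"
  shows "\<psi> (inverse z) (twisted_orbit (\<phi> z x) w) = twisted_orbit x (z * w)"
  unfolding twisted_orbit_def
  using psi_mult[of "inverse z" "inverse w"] action_mult[of w z x] assms
  by (simp add: mult.commute)

lemma continuous_on_Fmap: "continuous_on UNIV F"
proof -
  have "continuous_on (UNIV \<times> cbox 0 1)
      (\<lambda>(x, t). twisted_orbit x (exp (2 * pi * \<i> * complex_of_real t)))"
    unfolding case_prod_beta by (intro continuous_on_twisted_orbit_comp continuous_intros) auto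
  from integral_continuous_on_param[OF this]
  show ?thesis by (simp add: Fmap_eq_integral_twisted_orbit[abs_def] cbox_interval)
qed

lemma Fmap_action:
  assumes "z \<noteq> 0"
  shows "F (\<phi> z x) = \<psi> z (F x)"
proof -
  define e where "e = (\<lambda>t::real. exp (2 * pi * \<i> * complex_of_real t))"
  have integrable: "(\<lambda>t. twisted_orbit y (c * e t)) integrable_on {0..1}" if "c \<noteq> 0" for y c
    unfolding e_def using that
    by (intro integrable_continuous_interval continuous_on_twisted_orbit_comp continuous_intros) auto
  have "\<psi> (inverse z) (F (\<phi> z x)) = integral {0..1} (\<lambda>t. \<psi> (inverse z) (twisted_orbit (\<phi> z x) (e t)))"
    using integral_linear[OF integrable[of 1] bounded_linear_psi, of "inverse z"] assms
    by (simp add: Fmap_eq_integral_twisted_orbit e_def o_def)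
  also have "\<dots> = integral {0..1} (\<lambda>t. twisted_orbit x (z * e t))"
    using twisted_orbit_action assms by (simp add: e_def)
  also have "\<dots> = integral {0..1} (\<lambda>t. twisted_orbit x (e t))"
    using integral_circle_scale[OF holomorphic_on_twisted_orbit_component assms]
      integral_vec_nth[OF integrable[OF assms]] integral_vec_nth[OF integrable[of 1]]
    by (simp add: vec_eq_iff e_def)
  also have "\<dots> = F x"
    by (simp add: Fmap_eq_integral_twisted_orbit e_def)
  finally show ?thesis
    using psi_inverse_right[OF assms] by metis
qed

lemma eq_action_if_Fmap_intertwined:
  assumes "open U" "p \<in> U" "inj_on F U" "w \<noteq> 0" "connected (\<psi> w ` F ` U \<inter> F ` U)"
    and "u1 \<in> U" "u2 \<in> U" "F u1 = \<psi> w (F u2)"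
  shows "u1 = \<phi> w u2"
proof (rule intertwined_values_eq[where \<Phi> = "\<phi> w" and L = "\<psi> w" and L' = "\<psi> (inverse w)",
      OF assms(1,2) continuous_on_subset[OF continuous_on_Fmap] assms(3)])
  show "continuous_on UNIV (\<phi> w)"
    using continuous_on_action_comp[of UNIV "\<lambda>_. w" id] \<open>w \<noteq> 0\<close> by (simp add: continuous_on_id)
  show "continuous_on UNIV (\<psi> (inverse w))"
    using \<open>w \<noteq> 0\<close> by (auto intro!: linear_continuous_on bounded_linear_psi)
qed (use assms Fmap_action fixed psi_inverse_left psi_inverse_right in auto)

lemma SatE:
  assumes "x \<in> Sat U \<phi>"
  obtains z u where "z \<noteq> 0" "u \<in> U" "x = \<phi> z u"
proof -
  from assms obtain y a b where "a \<noteq> 0" "x = \<phi> a y" "b \<noteq> 0" "\<phi> b y \<in> U"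
    unfolding Sat_def orbit_def by blast
  moreover have "\<phi> (a / b) (\<phi> b y) = \<phi> a y"
    using action_mult[of "a / b" b y] \<open>a \<noteq> 0\<close> \<open>b \<noteq> 0\<close> by simp
  ultimately show ?thesis using that[of "a / b" "\<phi> b y"] by simp
qed

end

theorem lemma2:
  fixes \<phi> :: "complex \<Rightarrow> complex ^ 'n \<Rightarrow> complex ^ 'n"
    and p :: "complex ^ 'n" and U V :: "(complex ^ 'n) set"
  assumes "holomorphic_action \<phi>"
    and "\<forall>z. z \<noteq> 0 \<longrightarrow> \<phi> z p = p"
    and "open U" and "p \<in> U"
    and "V = Fmap \<phi> p ` U" and "open V"
    and "inj_on (Fmap \<phi> p) U"
    and "\<forall>z. z \<noteq> 0 \<longrightarrow> connected (lin_action \<phi> p z ` V \<inter> V)"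
  shows "inj_on (Fmap \<phi> p) (Sat U \<phi>)"
proof (rule inj_onI)
  interpret fixed_point_action \<phi> p using assms(1,2) by unfold_locales auto
  fix x y assume "x \<in> Sat U \<phi>" "y \<in> Sat U \<phi>" and "F x = F y"
  obtain z1 u1 where z1: "z1 \<noteq> 0" "u1 \<in> U" "x = \<phi> z1 u1" using SatE[OF \<open>x \<in> Sat U \<phi>\<close>] .
  obtain z2 u2 where z2: "z2 \<noteq> 0" "u2 \<in> U" "y = \<phi> z2 u2" using SatE[OF \<open>y \<in> Sat U \<phi>\<close>] .
  define w where "w = inverse z1 * z2"
  have "w \<noteq> 0" using z1 z2 by (simp add: w_def)
  have "\<psi> z1 (F u1) = \<psi> z2 (F u2)" using \<open>F x = F y\<close> z1 z2 Fmap_action by simp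
  then have "F u1 = \<psi> w (F u2)"
    using psi_inverse_left[of z1] psi_mult[of "inverse z1" z2] z1 z2 by (metis w_def inverse_nonzero_iff_nonzero)
  then have "u1 = \<phi> w u2"
    using eq_action_if_Fmap_intertwined assms(3,4,5,7,8) \<open>w \<noteq> 0\<close> z1 z2 by blast
  then have "x = \<phi> (z1 * w) u2" using z1 action_mult[OF \<open>z1 \<noteq> 0\<close> \<open>w \<noteq> 0\<close>] by simp
  also have "z1 * w = z2" using z1 by (simp add: w_def)
  finally show "x = y" using z2 by simp
qed

end
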